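(* Let $s\ge2$. For all positive integers $z\le z'$ (with $z$ large), $$\sum_{\substack{\omega\sim\omega'\\ \omega\in\Omega_z,\ \omega'\in\Omega_{z'}}}P(E_\omega\cap E_{\omega'})\ll z^{-1/s}\log z,$$ where the implied constant depends only on $s$.
   Context: Let $A\subseteq\{1,2,\dots\}$ be a random set in which the events $\{n\in A\}$ are mutually independent with $P(n\in A)=\frac1s n^{-1+1/s}$. For a finite set $\omega$ of distinct positive integers, $E_\omega$ is the event $\{\omega\subseteq A\}$. For $\omega=\{x_1,\dots,x_r\}$ define $\sigma(\omega)=\{a_1x_1+\cdots+a_rx_r: a_1+\cdots+a_r=s,\ a_i\ge1 \text{ integers}\}$, and for an integer $z$ let $\Omega_z=\{\omega: z\in\sigma(\omega)\}$. We write $\omega\sim\omega'$ if $\omega\cap\omega'\neq\emptyset$ and $\omega\neq\omega'$. *)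

theory Defs
  imports "HOL-Probability.Probability"
begin

definition pr_in :: "nat \<Rightarrow> nat \<Rightarrow> real" where
  "pr_in s n = (1 / real s) * real n powr (-1 + 1 / real s)"

text \<open>The random set A, encoded by its indicator A :: nat => bool; the events
  (n in A) are independent Bernoulli(pr_in s n).\<close>
definition rand_set :: "nat \<Rightarrow> (nat \<Rightarrow> bool) measure" where
  "rand_set s = (\<Pi>\<^sub>M n\<in>UNIV. measure_pmf (bernoulli_pmf (pr_in s n)))"

definition E_ev :: "nat \<Rightarrow> nat set \<Rightarrow> (nat \<Rightarrow> bool) set" where
  "E_ev s \<omega> = {A \<in> space (rand_set s). \<forall>n\<in>\<omega>. A n}"

definition sigma_set :: "nat \<Rightarrow> nat set \<Rightarrow> nat set" where
  "sigma_set s \<omega> = {(\<Sum>x\<in>\<omega>. a x * x) | a. (\<forall>x\<in>\<omega>. a x \<ge> 1) \<and> (\<Sum>x\<in>\<omega>. a x) = s}"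

definition Omega :: "nat \<Rightarrow> nat \<Rightarrow> nat set set" where
  "Omega s z = {\<omega>. finite \<omega> \<and> 0 \<notin> \<omega> \<and> z \<in> sigma_set s \<omega>}"

definition rel_sim :: "nat set \<Rightarrow> nat set \<Rightarrow> bool" where
  "rel_sim \<omega> \<omega>' \<longleftrightarrow> \<omega> \<inter> \<omega>' \<noteq> {} \<and> \<omega> \<noteq> \<omega>'"

end

theory Submission
  imports Defs "HOL-Analysis.Harmonic_Numbers"
begin

text \<open>
  Split an overlapping pair (\<omega>, \<omega>') into K = \<omega> \<inter> \<omega>' \<noteq> {}, I = \<omega> - \<omega>' and
  J = \<omega>' - \<omega>; then P(E_\<omega> \<inter> E_\<omega>') is the product of P(n \<in> A) over K \<union> I \<union> J.
  There are only finitely many coefficient patterns (depending on s), and for a fixed pattern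
  the sum over pairs is at most a sum over K of R_I(z - a\<cdot>K) R_J(z' - c\<cdot>K), where R_c(w), the
  probability weight of all representations of w with coefficients c_1, ..., c_n, is
  O(w^(n/s - 1)) by induction on n (a convolution of two powers). If |K| + |I| < s, the
  a-side alone already gives O(z^(-1/s)), and symmetrically for the c-side. Otherwise all
  coefficients on K are 1 on both sides, both sides share the K-sum m, and with \<beta> = |I|/s
  the bound is the sum over m < z of m^(-\<beta>) (z - m)^(2\<beta> - 2), which is O(z^(-1/s) log z).
\<close>

section \<open>Sums of powers\<close>

lemma powr_diff_pred_ge:
  fixes \<beta> y :: real
  assumes "0 < \<beta>" "\<beta> \<le> 1" "1 \<le> y"
  shows "\<beta> * y powr (\<beta> - 1) \<le> y powr \<beta> - (y - 1) powr \<beta>"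
proof (cases "y = 1")
  case True
  then show ?thesis using assms by simp
next
  case False
  hence y1: "y > 1" using assms by simp
  have "((y-1)/y) powr \<beta> * 1 powr (1-\<beta>) \<le> \<beta> * ((y-1)/y) + (1-\<beta>) * 1"
    using assms y1 by (intro Youngs_inequality_0) auto
  hence "(y-1) powr \<beta> \<le> y powr \<beta> * (1 - \<beta> / y)"
    using y1 by (simp add: powr_divide field_simps)
  also have "\<dots> = y powr \<beta> - \<beta> * (y powr \<beta> / y)" using y1 by (simp add: algebra_simps)
  also have "y powr \<beta> / y = y powr (\<beta> - 1)" using y1 by (simp add: powr_diff)
  finally show ?thesis by simp
qed

lemma sum_powr_le:
  fixes \<beta> :: real
  assumes "0 < \<beta>" "\<beta> \<le> 1"
  shows "(\<Sum>y=1..n. real y powr (\<beta> - 1)) \<le> real n powr \<beta> / \<beta>"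
proof (induction n)
  case (Suc n)
  have "(\<Sum>y=1..Suc n. real y powr (\<beta> - 1)) = (\<Sum>y=1..n. real y powr (\<beta> - 1)) + real (Suc n) powr (\<beta> - 1)"
    by simp
  also have "\<dots> \<le> real n powr \<beta> / \<beta> + (real (Suc n) powr \<beta> - real n powr \<beta>) / \<beta>"
    using Suc powr_diff_pred_ge[OF assms, of "real (Suc n)"] assms
    by (intro add_mono) (auto simp: field_simps)
  also have "\<dots> = real (Suc n) powr \<beta> / \<beta>" by (simp add: diff_divide_distrib)
  finally show ?case .
qed simp

lemma sum_powr_le_ln:
  fixes \<gamma> :: real
  assumes "0 \<le> \<gamma>" "n \<ge> 1"
  shows "(\<Sum>j=1..n. real j powr (-\<gamma>)) \<le> (1 + ln (real n)) * (1 + real n powr (1 - \<gamma>))"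
proof -
  have "real j powr (-\<gamma>) \<le> (1 / real j) * (1 + real n powr (1 - \<gamma>))" if j: "j \<in> {1..n}" for j
  proof -
    have "real j powr (1 - \<gamma>) \<le> max 1 (real n powr (1 - \<gamma>))"
      using j powr_mono[of "1 - \<gamma>" 0 "real j"] powr_mono2[of "1 - \<gamma>" "real j" "real n"]
      by (cases "1 - \<gamma> \<ge> 0") auto
    then have "real j powr (1 - \<gamma>) \<le> 1 + real n powr (1 - \<gamma>)"
      by (smt (verit) powr_ge_zero)
    moreover have "real j powr (-\<gamma>) = (1 / real j) * real j powr (1 - \<gamma>)"
      using j by (simp add: powr_diff powr_minus field_simps)
    ultimately show ?thesis using j by (auto intro!: divide_right_mono)
  qed
  then have "(\<Sum>j=1..n. real j powr (-\<gamma>)) \<le> (\<Sum>j=1..n. (1 / real j) * (1 + real n powr (1 - \<gamma>)))"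
    by (rule sum_mono)
  also have "\<dots> = harm n * (1 + real n powr (1 - \<gamma>))"
    by (simp add: harm_def sum_distrib_right atLeast1_atMost_eq_remove0 inverse_eq_divide)
  also have "harm n \<le> 1 + ln (real n)"
    using euler_mascheroni_sequence_decreasing[of 1 n] assms(2) by (simp add: harm_def)
  finally show ?thesis by (simp add: mult_right_mono)
qed

lemma powr_le_of_half_le:
  fixes w x e :: real
  assumes "e \<le> 0" "0 < w" "w / 2 \<le> x"
  shows "x powr e \<le> 2 powr (-e) * w powr e"
proof -
  have "x powr e \<le> (w/2) powr e" using assms by (intro powr_mono2') auto
  also have "\<dots> = 2 powr (-e) * w powr e" using assms by (simp add: powr_divide powr_minus field_simps)
  finally show ?thesis .
qed

text \<open>In a convolution of two decreasing powers one of the two factors sits at a point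
  at least w/2 and can be replaced by its value at w.\<close>
lemma convolution_powr_le_split:
  fixes a b :: real
  assumes "a \<le> 0" "b \<le> 0"
  shows "(\<Sum>y\<in>{1..<w}. real y powr a * real (w - y) powr b)
     \<le> 2 powr (-b) * real w powr b * (\<Sum>y\<in>{1..<w}. real y powr a)
      + 2 powr (-a) * real w powr a * (\<Sum>y\<in>{1..<w}. real y powr b)"
proof -
  have "real y powr a * real (w - y) powr b
      \<le> 2 powr (-b) * real w powr b * real y powr a + 2 powr (-a) * real w powr a * real (w - y) powr b"
    if y: "y \<in> {1..<w}" for y
  proof (cases "2 * y \<le> w")
    case True
    hence "real (w - y) powr b \<le> 2 powr (-b) * real w powr b"
      using y assms by (intro powr_le_of_half_le) (auto simp: of_nat_diff)
    hence "real y powr a * real (w - y) powr b \<le> 2 powr (-b) * real w powr b * real y powr a"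
      by (metis mult.commute mult_left_mono powr_ge_zero)
    then show ?thesis by (smt (verit) mult_nonneg_nonneg powr_ge_zero)
  next
    case False
    hence "real y powr a \<le> 2 powr (-a) * real w powr a"
      using y assms by (intro powr_le_of_half_le) auto
    hence "real y powr a * real (w - y) powr b \<le> 2 powr (-a) * real w powr a * real (w - y) powr b"
      by (intro mult_right_mono) auto
    then show ?thesis by (smt (verit) mult_nonneg_nonneg powr_ge_zero)
  qed
  then have "(\<Sum>y\<in>{1..<w}. real y powr a * real (w - y) powr b)
     \<le> (\<Sum>y\<in>{1..<w}. 2 powr (-b) * real w powr b * real y powr a
                       + 2 powr (-a) * real w powr a * real (w - y) powr b)"
    by (rule sum_mono)
  also have "\<dots> = 2 powr (-b) * real w powr b * (\<Sum>y\<in>{1..<w}. real y powr a)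
      + 2 powr (-a) * real w powr a * (\<Sum>y\<in>{1..<w}. real (w - y) powr b)"
    by (simp only: sum.distrib sum_distrib_left)
  also have "(\<Sum>y\<in>{1..<w}. real (w - y) powr b) = (\<Sum>y\<in>{1..<w}. real y powr b)"
    by (rule sum.reindex_bij_witness[where i="\<lambda>y. w - y" and j="\<lambda>y. w - y"]) auto
  finally show ?thesis .
qed

lemma convolution_powr_le:
  fixes \<beta> \<gamma> :: real
  assumes \<beta>: "0 < \<beta>" "\<beta> \<le> 1" and \<gamma>: "0 < \<gamma>" "\<gamma> \<le> 1" and "w \<ge> 1"
  shows "(\<Sum>y\<in>{1..<w}. real y powr (\<beta> - 1) * real (w - y) powr (\<gamma> - 1))
          \<le> 2 * (1/\<beta> + 1/\<gamma>) * real w powr (\<beta> + \<gamma> - 1)"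
proof -
  have sum_le: "(\<Sum>y\<in>{1..<w}. real y powr (e - 1)) \<le> real w powr e / e" if "0 < e" "e \<le> 1" for e
  proof -
    have "(\<Sum>y\<in>{1..<w}. real y powr (e - 1)) \<le> (\<Sum>y=1..w. real y powr (e - 1))"
      by (intro sum_mono2) auto
    also have "\<dots> \<le> real w powr e / e" using sum_powr_le[OF that] .
    finally show ?thesis .
  qed
  have two: "2 powr (1 - e) \<le> 2" if "0 < e" for e :: real
    using powr_mono[of "1 - e" 1 2] that by simp
  have "(\<Sum>y\<in>{1..<w}. real y powr (\<beta> - 1) * real (w - y) powr (\<gamma> - 1))
     \<le> 2 powr (1 - \<gamma>) * real w powr (\<gamma> - 1) * (\<Sum>y\<in>{1..<w}. real y powr (\<beta> - 1))
      + 2 powr (1 - \<beta>) * real w powr (\<beta> - 1) * (\<Sum>y\<in>{1..<w}. real y powr (\<gamma> - 1))"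
    using convolution_powr_le_split[of "\<beta> - 1" "\<gamma> - 1" w] \<beta> \<gamma> by simp
  also have "\<dots> \<le> 2 * real w powr (\<gamma> - 1) * (real w powr \<beta> / \<beta>)
      + 2 * real w powr (\<beta> - 1) * (real w powr \<gamma> / \<gamma>)"
    using sum_le[OF \<beta>] sum_le[OF \<gamma>] two[OF \<beta>(1)] two[OF \<gamma>(1)]
    by (intro add_mono mult_mono) (auto intro: sum_nonneg)
  also have "\<dots> = 2 * (1/\<beta> + 1/\<gamma>) * real w powr (\<beta> + \<gamma> - 1)"
    using assms by (simp add: field_simps powr_add[symmetric] powr_diff)
  finally show ?thesis .
qed

lemma convolution_powr_le_ln:
  fixes \<beta> \<delta> :: real
  assumes "0 \<le> \<delta>" "\<delta> \<le> \<beta>" "\<beta> \<le> 1 - \<delta>" and z: "z \<ge> 1"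
  shows "(\<Sum>m\<in>{1..<z}. real m powr (-\<beta>) * real (z - m) powr (2 * \<beta> - 2))
          \<le> 16 * (1 + ln (real z)) * real z powr (-\<delta>)"
proof -
  have sum_le: "(\<Sum>m\<in>{1..<z}. real m powr (-g)) \<le> (1 + ln (real z)) * (1 + real z powr (1 - g))"
    if "0 \<le> g" for g
  proof -
    have "(\<Sum>m\<in>{1..<z}. real m powr (-g)) \<le> (\<Sum>m=1..z. real m powr (-g))"
      by (intro sum_mono2) auto
    also have "\<dots> \<le> (1 + ln (real z)) * (1 + real z powr (1 - g))" by (rule sum_powr_le_ln[OF that z])
    finally show ?thesis .
  qed
  have four: "2 powr e \<le> 4" if "e \<le> 2" for e :: real
    using powr_mono[of e 2 2] that by simp
  have small: "real z powr e \<le> real z powr (-\<delta>)" if "e \<le> -\<delta>" for e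
    using z that by (intro powr_mono) auto
  have "(\<Sum>m\<in>{1..<z}. real m powr (-\<beta>) * real (z - m) powr (2 * \<beta> - 2))
     \<le> 2 powr (2 - 2 * \<beta>) * real z powr (2 * \<beta> - 2) * (\<Sum>m\<in>{1..<z}. real m powr (-\<beta>))
      + 2 powr \<beta> * real z powr (-\<beta>) * (\<Sum>m\<in>{1..<z}. real m powr (-(2 - 2 * \<beta>)))"
    using convolution_powr_le_split[of "-\<beta>" "2 * \<beta> - 2" z] assms by simp
  also have "\<dots> \<le> 4 * real z powr (2 * \<beta> - 2) * ((1 + ln (real z)) * (1 + real z powr (1 - \<beta>)))
      + 4 * real z powr (-\<beta>) * ((1 + ln (real z)) * (1 + real z powr (1 - (2 - 2 * \<beta>))))"
    using sum_le[of \<beta>] sum_le[of "2 - 2 * \<beta>"] four[of "2 - 2 * \<beta>"] four[of \<beta>] assms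
    by (intro add_mono mult_mono) (auto intro: sum_nonneg)
  also have "\<dots> = 4 * (1 + ln (real z)) * (real z powr (2 * \<beta> - 2) + real z powr (\<beta> - 1)
      + real z powr (-\<beta>) + real z powr (\<beta> - 1))"
    by (simp add: algebra_simps flip: powr_add)
  also have "\<dots> \<le> 4 * (1 + ln (real z)) * (4 * real z powr (-\<delta>))"
    using small[of "2 * \<beta> - 2"] small[of "\<beta> - 1"] small[of "-\<beta>"] assms z
    by (intro mult_left_mono) auto
  also have "\<dots> = 16 * (1 + ln (real z)) * real z powr (-\<delta>)"
    by simp
  finally show ?thesis .
qed

section \<open>Weighted counts of representations\<close>

definition bounded_lists :: "nat \<Rightarrow> nat \<Rightarrow> nat list set" where
  "bounded_lists n N = {L. set L \<subseteq> {1..N} \<and> length L = n}"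

fun dot :: "nat list \<Rightarrow> nat list \<Rightarrow> nat" where
  "dot (c # cs) (x # xs) = c * x + dot cs xs"
| "dot _ _ = 0"

definition list_prob :: "nat \<Rightarrow> nat list \<Rightarrow> real" where
  "list_prob s L = prod_list (map (pr_in s) L)"

text \<open>Probability weight of the representations w = c_1 x_1 + ... + c_n x_n with 1 \<le> x_i \<le> N;
  the x_i need not be distinct.\<close>
definition rep_weight :: "nat \<Rightarrow> nat \<Rightarrow> nat list \<Rightarrow> nat \<Rightarrow> real" where
  "rep_weight s N cs w = (\<Sum>L\<in>bounded_lists (length cs) N. if dot cs L = w then list_prob s L else 0)"

lemma finite_bounded_lists [simp]: "finite (bounded_lists n N)"
  unfolding bounded_lists_def using finite_lists_length_eq[of "{1..N}" n] by simp

lemma bounded_lists_0 [simp]: "bounded_lists 0 N = {[]}"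
  by (auto simp: bounded_lists_def)

lemma sum_bounded_lists_Suc:
  fixes f :: "nat list \<Rightarrow> real"
  shows "(\<Sum>L\<in>bounded_lists (Suc n) N. f L) = (\<Sum>x\<in>{1..N}. \<Sum>L\<in>bounded_lists n N. f (x # L))"
proof -
  have "bounded_lists (Suc n) N = (\<lambda>(x, L). x # L) ` ({1..N} \<times> bounded_lists n N)"
    by (auto simp: bounded_lists_def image_iff length_Suc_conv)
  moreover have "inj_on (\<lambda>(x, L). x # L) ({1..N} \<times> bounded_lists n N)"
    by (auto simp: inj_on_def)
  ultimately have "(\<Sum>L\<in>bounded_lists (Suc n) N. f L) = (\<Sum>(x, L)\<in>{1..N} \<times> bounded_lists n N. f (x # L))"
    by (simp add: sum.reindex case_prod_unfold)
  then show ?thesis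
    by (simp add: sum.cartesian_product)
qed

lemma pr_in_nonneg [simp]: "0 \<le> pr_in s n"
  by (simp add: pr_in_def)

lemma list_prob_nonneg [simp]: "0 \<le> list_prob s L"
  by (induction L) (auto simp: list_prob_def)

lemma list_prob_Cons [simp]: "list_prob s (x # L) = pr_in s x * list_prob s L"
  by (simp add: list_prob_def)

lemma rep_weight_nonneg [simp]: "0 \<le> rep_weight s N cs w"
  by (simp add: rep_weight_def sum_nonneg)

lemma rep_weight_Nil: "rep_weight s N [] w = (if w = 0 then 1 else 0)"
  by (simp add: rep_weight_def list_prob_def)

lemma rep_weight_Cons:
  "rep_weight s N (c # cs) w =
     (\<Sum>x\<in>{1..N}. pr_in s x * (if c * x \<le> w then rep_weight s N cs (w - c * x) else 0))"
  unfolding rep_weight_def length_Cons sum_bounded_lists_Suc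
  by (intro sum.cong refl) (auto simp: sum_distrib_left intro!: sum.cong)

lemma rep_weight_at_0:
  assumes "cs \<noteq> []" "0 \<notin> set cs"
  shows "rep_weight s N cs 0 = 0"
  using assms by (cases cs) (auto simp: rep_weight_Cons intro!: sum.neutral)

lemma pr_in_le_powr:
  assumes "1 \<le> c" "c \<le> s" "x \<ge> 1"
  shows "pr_in s x \<le> real (c * x) powr (1 / real s - 1)"
proof -
  have "1 / real s \<le> 1 / real c" using assms by (intro divide_left_mono) auto
  also have "\<dots> = real c powr (-1)" using assms by (simp add: powr_minus divide_inverse)
  also have "\<dots> \<le> real c powr (1 / real s - 1)" using assms by (intro powr_mono) auto
  finally have "1 / real s * real x powr (1 / real s - 1)
      \<le> real c powr (1 / real s - 1) * real x powr (1 / real s - 1)"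
    by (intro mult_right_mono) auto
  then show ?thesis by (simp add: pr_in_def powr_mult)
qed

lemma sum_mult_index_le:
  fixes g :: "nat \<Rightarrow> real"
  assumes "c \<ge> 1" "\<And>y. 0 \<le> g y"
  shows "(\<Sum>x\<in>{1..N}. if c * x < w then g (c * x) else 0) \<le> (\<Sum>y\<in>{1..<w}. g y)"
proof -
  have "(\<Sum>x\<in>{1..N}. if c * x < w then g (c * x) else 0) = (\<Sum>x\<in>{x\<in>{1..N}. c * x < w}. g (c * x))"
    by (rule sum.inter_filter[symmetric]) simp
  also have "\<dots> = (\<Sum>y\<in>(\<lambda>x. c * x) ` {x\<in>{1..N}. c * x < w}. g y)"
    using assms by (subst sum.reindex) (auto simp: inj_on_def)
  also have "\<dots> \<le> (\<Sum>y\<in>{1..<w}. g y)"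
    using assms by (intro sum_mono2) auto
  finally show ?thesis .
qed

lemma rep_weight_singleton_le:
  assumes "1 \<le> c" "c \<le> s"
  shows "rep_weight s N [c] w \<le> real w powr (1 / real s - 1)"
proof -
  have "rep_weight s N [c] w \<le> (\<Sum>x\<in>{1..N}. if x = w div c then real w powr (1 / real s - 1) else 0)"
    unfolding rep_weight_Cons
  proof (intro sum_mono)
    fix x assume x: "x \<in> {1..N}"
    show "pr_in s x * (if c * x \<le> w then rep_weight s N [] (w - c * x) else 0)
        \<le> (if x = w div c then real w powr (1 / real s - 1) else 0)"
    proof (cases "c * x = w")
      case True
      then show ?thesis using pr_in_le_powr[of c s x] assms x by (auto simp: rep_weight_Nil)
    next
      case False
      then have "pr_in s x * (if c * x \<le> w then rep_weight s N [] (w - c * x) else 0) = 0"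
        by (simp add: rep_weight_Nil)
      moreover have "0 \<le> (if x = w div c then real w powr (1 / real s - 1) else 0)"
        by simp
      ultimately show ?thesis by linarith
    qed
  qed
  also have "\<dots> \<le> real w powr (1 / real s - 1)"
    by (simp add: sum.delta')
  finally show ?thesis .
qed

lemma rep_weight_le_powr:
  assumes s: "s \<ge> 2" and cs: "set cs \<subseteq> {1..s}" "cs \<noteq> []" "length cs \<le> s" and "w \<ge> 1"
  shows "rep_weight s N cs w \<le> (4 * real s) ^ length cs * real w powr (real (length cs) / real s - 1)"
  using cs(2,1,3) \<open>w \<ge> 1\<close>
proof (induction cs arbitrary: w rule: list_nonempty_induct)
  case (single c)
  then have "rep_weight s N [c] w \<le> real w powr (1 / real s - 1)"
    by (intro rep_weight_singleton_le) auto
  also have "\<dots> \<le> 4 * real s * real w powr (1 / real s - 1)"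
    using s by (simp add: mult_le_cancel_right1)
  finally show ?case by simp
next
  case (cons c cs)
  define n where "n = length cs"
  have c: "1 \<le> c" "c \<le> s" and n: "1 \<le> n" "n + 1 \<le> s"
    using cons by (auto simp: n_def Suc_le_eq)
  define B where "B = (4 * real s) ^ n"
  define g where "g y = real y powr (1 / real s - 1) * real (w - y) powr (real n / real s - 1)" for y
  have "pr_in s x * (if c * x \<le> w then rep_weight s N cs (w - c * x) else 0)
      \<le> (if c * x < w then B * g (c * x) else 0)" if x: "x \<in> {1..N}" for x
  proof (cases "c * x < w")
    case True
    have "rep_weight s N cs (w - c * x) \<le> B * real (w - c * x) powr (real n / real s - 1)"
      using cons.IH[of "w - c * x"] cons.prems True by (simp add: B_def n_def)
    then have "pr_in s x * rep_weight s N cs (w - c * x)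
        \<le> real (c * x) powr (1 / real s - 1) * (B * real (w - c * x) powr (real n / real s - 1))"
      using pr_in_le_powr[of c s x] c x by (intro mult_mono) auto
    then show ?thesis
      using True by (simp add: g_def mult_ac)
  next
    case False
    have "0 \<notin> set cs" using cons.prems by auto
    then have "rep_weight s N cs 0 = 0" using rep_weight_at_0[of cs s N] cons.hyps by simp
    then show ?thesis using False by (cases "c * x = w") auto
  qed
  then have "rep_weight s N (c # cs) w \<le> (\<Sum>x\<in>{1..N}. if c * x < w then B * g (c * x) else 0)"
    unfolding rep_weight_Cons by (rule sum_mono)
  also have "\<dots> = B * (\<Sum>x\<in>{1..N}. if c * x < w then g (c * x) else 0)"
    by (simp add: sum_distrib_left if_distrib cong: if_cong)
  also have "\<dots> \<le> B * (\<Sum>y\<in>{1..<w}. g y)"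
    using c by (intro mult_left_mono sum_mult_index_le) (auto simp: g_def B_def)
  also have "(\<Sum>y\<in>{1..<w}. g y)
      \<le> 2 * (1 / (1 / real s) + 1 / (real n / real s)) * real w powr (1 / real s + real n / real s - 1)"
    unfolding g_def using s n cons by (intro convolution_powr_le) auto
  also have "2 * (1 / (1 / real s) + 1 / (real n / real s)) \<le> 4 * real s"
    using n s by (simp add: divide_le_eq)
  finally show ?case
    by (simp add: B_def n_def add_divide_distrib algebra_simps mult_left_mono mult_right_mono)
qed

lemma rep_weight_le_powr':
  assumes "s \<ge> 2" "set cs \<subseteq> {1..s}" "cs \<noteq> []" "length cs \<le> s" "w \<ge> 1"
  shows "rep_weight s N cs w \<le> (4 * real s) ^ s * real w powr (real (length cs) / real s - 1)"
proof -
  have "rep_weight s N cs w \<le> (4 * real s) ^ length cs * real w powr (real (length cs) / real s - 1)"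
    using assms by (rule rep_weight_le_powr)
  also have "\<dots> \<le> (4 * real s) ^ s * real w powr (real (length cs) / real s - 1)"
    using assms by (intro mult_right_mono power_increasing) auto
  finally show ?thesis .
qed

lemma rep_weight_le:
  assumes s: "s \<ge> 2" and cs: "set cs \<subseteq> {1..s}" "length cs \<le> s"
  shows "rep_weight s N cs w \<le> (4 * real s) ^ s"
proof -
  consider "cs = []" | "cs \<noteq> []" "w = 0" | "cs \<noteq> []" "w \<ge> 1" by linarith
  then show ?thesis
  proof cases
    case 1
    have "1 \<le> (4 * real s) ^ s" using s by (intro one_le_power) auto
    then show ?thesis using 1 by (simp add: rep_weight_Nil)
  next
    case 2
    moreover have "0 \<notin> set cs" using cs by auto
    ultimately show ?thesis using rep_weight_at_0[of cs s N] by simp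
  next
    case 3
    have "real w powr (real (length cs) / real s - 1) \<le> 1"
      using 3 cs s powr_mono[of "real (length cs) / real s - 1" 0 "real w"]
      by (auto simp: divide_le_eq)
    then show ?thesis
      using rep_weight_le_powr'[OF s cs(1) 3(1) cs(2) 3(2), of N] s
      by (smt (verit) mult_left_le zero_le_power of_nat_0_le_iff)
  qed
qed

lemma rep_weight_append:
  "rep_weight s N (xs @ ys) w = (\<Sum>L\<in>bounded_lists (length xs) N.
     list_prob s L * (if dot xs L \<le> w then rep_weight s N ys (w - dot xs L) else 0))"
proof (induction xs arbitrary: w)
  case Nil
  then show ?case by (simp add: list_prob_def)
next
  case (Cons c xs)
  have "rep_weight s N ((c # xs) @ ys) w
      = (\<Sum>x\<in>{1..N}. pr_in s x * (if c * x \<le> w then rep_weight s N (xs @ ys) (w - c * x) else 0))"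
    by (simp add: rep_weight_Cons)
  also have "\<dots> = (\<Sum>x\<in>{1..N}. \<Sum>L\<in>bounded_lists (length xs) N. list_prob s (x # L) *
      (if dot (c # xs) (x # L) \<le> w then rep_weight s N ys (w - dot (c # xs) (x # L)) else 0))"
    by (intro sum.cong refl)
      (auto simp: Cons.IH sum_distrib_left diff_diff_add intro!: sum.cong)
  also have "\<dots> = (\<Sum>L\<in>bounded_lists (length (c # xs)) N. list_prob s L *
      (if dot (c # xs) L \<le> w then rep_weight s N ys (w - dot (c # xs) L) else 0))"
    unfolding length_Cons sum_bounded_lists_Suc ..
  finally show ?case .
qed

lemma sum_rep_weight_lessThan:
  fixes G :: "nat \<Rightarrow> real"
  shows "(\<Sum>L\<in>bounded_lists (length cs) N. list_prob s L * (if dot cs L < z then G (dot cs L) else 0))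
       = (\<Sum>m<z. rep_weight s N cs m * G m)"
proof -
  have "(\<Sum>m<z. rep_weight s N cs m * G m)
      = (\<Sum>m<z. \<Sum>L\<in>bounded_lists (length cs) N. if dot cs L = m then list_prob s L * G m else 0)"
    unfolding rep_weight_def sum_distrib_right by (intro sum.cong refl) auto
  also have "\<dots> = (\<Sum>L\<in>bounded_lists (length cs) N. \<Sum>m<z. if dot cs L = m then list_prob s L * G m else 0)"
    by (rule sum.swap)
  also have "\<dots> = (\<Sum>L\<in>bounded_lists (length cs) N. list_prob s L * (if dot cs L < z then G (dot cs L) else 0))"
    by (intro sum.cong refl) (simp add: sum.delta eq_commute[of "dot cs _"])
  finally show ?thesis ..
qed

lemma sum_shifted_rep_weight:
  "(\<Sum>L\<in>bounded_lists (length cs) N. if d + dot cs L = z then list_prob s L else 0)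
     = (if d \<le> z then rep_weight s N cs (z - d) else 0)"
  unfolding rep_weight_def by (auto intro!: sum.cong sum.neutral)

section \<open>Coefficient patterns of overlapping pairs\<close>

lemma length_le_sum_list: "0 \<notin> set xs \<Longrightarrow> length xs \<le> sum_list (xs :: nat list)"
  by (induction xs) (auto simp: Suc_le_eq)

lemma sum_list_eq_length_imp_replicate:
  "0 \<notin> set xs \<Longrightarrow> sum_list xs = length xs \<Longrightarrow> xs = replicate (length xs) (1 :: nat)"
proof (induction xs)
  case (Cons x xs)
  have "length xs \<le> sum_list xs" using Cons.prems by (intro length_le_sum_list) auto
  then show ?case using Cons by auto
qed simp

text \<open>The coefficient pattern of an overlapping pair (\<omega>, \<omega>'): coefficients aK, aI of the
  representation of z on K = \<omega> \<inter> \<omega>' and I = \<omega> - \<omega>', and cK, cJ of the representation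
  of z' on K and J = \<omega>' - \<omega>.\<close>
definition shapes :: "nat \<Rightarrow> (nat list \<times> nat list \<times> nat list \<times> nat list) set" where
  "shapes s = {(aK, aI, cK, cJ). set aK \<subseteq> {1..s} \<and> set aI \<subseteq> {1..s} \<and> set cK \<subseteq> {1..s} \<and> set cJ \<subseteq> {1..s}
     \<and> length cK = length aK \<and> aK \<noteq> [] \<and> (aI \<noteq> [] \<or> cJ \<noteq> [])
     \<and> sum_list aK + sum_list aI = s \<and> sum_list cK + sum_list cJ = s}"

lemma shapes_swap: "(aK, aI, cK, cJ) \<in> shapes s \<Longrightarrow> (cK, cJ, aK, aI) \<in> shapes s"
  by (auto simp: shapes_def)

lemma shapes_length_le:
  assumes "(aK, aI, cK, cJ) \<in> shapes s"
  shows "length aK + length aI \<le> s" "length cK + length cJ \<le> s"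
proof -
  have "0 \<notin> set aK" "0 \<notin> set aI" "0 \<notin> set cK" "0 \<notin> set cJ"
    using assms by (auto simp: shapes_def)
  then show "length aK + length aI \<le> s" "length cK + length cJ \<le> s"
    using assms length_le_sum_list[of aK] length_le_sum_list[of aI]
      length_le_sum_list[of cK] length_le_sum_list[of cJ]
    by (auto simp: shapes_def)
qed

lemma shapes_common_eq:
  assumes Q: "(aK, aI, cK, cJ) \<in> shapes s" and "length aK + length aI = s" "length cK + length cJ = s"
  shows "cK = aK"
proof -
  have pos: "0 \<notin> set aK" "0 \<notin> set aI" "0 \<notin> set cK" "0 \<notin> set cJ"
    using Q by (auto simp: shapes_def)
  have sums: "sum_list aK + sum_list aI = s" "sum_list cK + sum_list cJ = s" "length cK = length aK"
    using Q by (auto simp: shapes_def)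
  have "sum_list aK = length aK" "sum_list cK = length cK"
    using assms(2,3) sums length_le_sum_list[OF pos(1)] length_le_sum_list[OF pos(2)]
      length_le_sum_list[OF pos(3)] length_le_sum_list[OF pos(4)]
    by linarith+
  then have "aK = replicate (length aK) 1" "cK = replicate (length cK) 1"
    using sum_list_eq_length_imp_replicate pos by blast+
  then show ?thesis
    using sums(3) by metis
qed

lemma finite_shapes: "finite (shapes s)"
proof -
  define S where "S = {xs. set xs \<subseteq> {1..s} \<and> length xs \<le> s}"
  have "Q \<in> S \<times> S \<times> S \<times> S" if "Q \<in> shapes s" for Q
  proof -
    obtain aK aI cK cJ where Q: "Q = (aK, aI, cK, cJ)" by (cases Q) auto
    show ?thesis
      using that shapes_length_le[of aK aI cK cJ s] unfolding Q by (auto simp: S_def shapes_def)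
  qed
  moreover have "finite S"
    unfolding S_def by (rule finite_lists_length_le) simp
  ultimately show ?thesis
    by (meson finite_SigmaI finite_subset subsetI)
qed

definition shape_weight ::
    "nat \<Rightarrow> nat \<Rightarrow> nat \<Rightarrow> nat \<Rightarrow> nat list \<times> nat list \<times> nat list \<times> nat list \<Rightarrow> real" where
  "shape_weight s N z z' Q = (case Q of (aK, aI, cK, cJ) \<Rightarrow>
     \<Sum>LK\<in>bounded_lists (length aK) N. \<Sum>LI\<in>bounded_lists (length aI) N. \<Sum>LJ\<in>bounded_lists (length cJ) N.
       if dot aK LK + dot aI LI = z \<and> dot cK LK + dot cJ LJ = z'
       then list_prob s LK * list_prob s LI * list_prob s LJ else 0)"

lemma shape_weight_eq:
  "shape_weight s N z z' (aK, aI, cK, cJ) = (\<Sum>LK\<in>bounded_lists (length aK) N. list_prob s LK *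
      (if dot aK LK \<le> z then rep_weight s N aI (z - dot aK LK) else 0) *
      (if dot cK LK \<le> z' then rep_weight s N cJ (z' - dot cK LK) else 0))"
  unfolding shape_weight_def prod.case
proof (intro sum.cong refl)
  fix LK
  let ?d = "dot aK LK" and ?d' = "dot cK LK"
  have "(\<Sum>LI\<in>bounded_lists (length aI) N. \<Sum>LJ\<in>bounded_lists (length cJ) N.
          if ?d + dot aI LI = z \<and> ?d' + dot cJ LJ = z'
          then list_prob s LK * list_prob s LI * list_prob s LJ else 0)
      = (\<Sum>LI\<in>bounded_lists (length aI) N. \<Sum>LJ\<in>bounded_lists (length cJ) N. list_prob s LK *
          ((if ?d + dot aI LI = z then list_prob s LI else 0) *
           (if ?d' + dot cJ LJ = z' then list_prob s LJ else 0)))"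
    by (intro sum.cong refl) auto
  also have "\<dots> = list_prob s LK *
        ((\<Sum>LI\<in>bounded_lists (length aI) N. if ?d + dot aI LI = z then list_prob s LI else 0) *
         (\<Sum>LJ\<in>bounded_lists (length cJ) N. if ?d' + dot cJ LJ = z' then list_prob s LJ else 0))"
    unfolding sum_product by (simp only: sum_distrib_left)
  finally show "(\<Sum>LI\<in>bounded_lists (length aI) N. \<Sum>LJ\<in>bounded_lists (length cJ) N.
          if ?d + dot aI LI = z \<and> ?d' + dot cJ LJ = z'
          then list_prob s LK * list_prob s LI * list_prob s LJ else 0)
      = list_prob s LK * (if ?d \<le> z then rep_weight s N aI (z - ?d) else 0) *
        (if ?d' \<le> z' then rep_weight s N cJ (z' - ?d') else 0)"
    by (simp add: sum_shifted_rep_weight)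
qed

lemma shape_weight_swap:
  "length cK = length aK \<Longrightarrow> shape_weight s N z z' (aK, aI, cK, cJ) = shape_weight s N z' z (cK, cJ, aK, aI)"
  unfolding shape_weight_eq by (simp add: mult_ac)

lemma shape_weight_le_unsaturated:
  assumes s: "s \<ge> 2" and Q: "(aK, aI, cK, cJ) \<in> shapes s"
    and short: "length aK + length aI < s" and z: "z \<ge> 1"
  shows "shape_weight s N z z' (aK, aI, cK, cJ) \<le> ((4 * real s) ^ s) ^ 2 * real z powr (-1 / real s)"
proof -
  define B where "B = (4 * real s) ^ s"
  have sets: "set (aK @ aI) \<subseteq> {1..s}" "set cJ \<subseteq> {1..s}" "aK @ aI \<noteq> []"
    using Q by (auto simp: shapes_def)
  have "shape_weight s N z z' (aK, aI, cK, cJ) \<le> (\<Sum>LK\<in>bounded_lists (length aK) N. list_prob s LK *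
      (if dot aK LK \<le> z then rep_weight s N aI (z - dot aK LK) else 0) * B)"
    unfolding shape_weight_eq
    using rep_weight_le[OF s sets(2)] shapes_length_le(2)[OF Q]
    by (intro sum_mono mult_left_mono) (auto simp: B_def)
  also have "\<dots> = B * rep_weight s N (aK @ aI) z"
    unfolding rep_weight_append sum_distrib_left by (intro sum.cong refl) (simp only: mult_ac)
  also have "rep_weight s N (aK @ aI) z \<le> B * real z powr (real (length aK + length aI) / real s - 1)"
    using rep_weight_le_powr'[OF s sets(1) sets(3) _ z] short by (simp add: B_def)
  also have "real z powr (real (length aK + length aI) / real s - 1) \<le> real z powr (-1 / real s)"
  proof (intro powr_mono)
    have "real (length aK + length aI) / real s \<le> (real s - 1) / real s"
      using short by (intro divide_right_mono) auto
    then show "real (length aK + length aI) / real s - 1 \<le> -1 / real s"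
      using s by (simp add: diff_divide_distrib)
  qed (use z in auto)
  finally show ?thesis
    using B_def by (simp add: power2_eq_square mult_left_mono)
qed

lemma rep_weight_pair_le:
  assumes s: "s \<ge> 2" and xs: "set xs \<subseteq> {1..s}" "xs \<noteq> []" "length xs = r"
    and ys: "set ys \<subseteq> {1..s}" "ys \<noteq> []" "length ys = r" and "r \<le> s" "z \<le> z'"
  shows "(if d \<le> z then rep_weight s N xs (z - d) else 0) * (if d \<le> z' then rep_weight s N ys (z' - d) else 0)
      \<le> (if d < z then ((4 * real s) ^ s) ^ 2 * real (z - d) powr (2 * (real r / real s) - 2) else 0)"
proof -
  define B where "B = (4 * real s) ^ s"
  define e where "e = real r / real s - 1"
  have e: "e \<le> 0" using assms by (simp add: e_def divide_le_eq)
  consider "d < z" | "d = z" | "d > z" by linarith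
  then show ?thesis
  proof cases
    case 1
    have "rep_weight s N xs (z - d) \<le> B * real (z - d) powr e"
      using rep_weight_le_powr'[OF s xs(1,2), where w = "z - d"] 1 assms by (simp add: B_def e_def)
    moreover have "rep_weight s N ys (z' - d) \<le> B * real (z - d) powr e"
    proof -
      have "rep_weight s N ys (z' - d) \<le> B * real (z' - d) powr e"
        using rep_weight_le_powr'[OF s ys(1,2), where w = "z' - d"] 1 assms by (simp add: B_def e_def)
      also have "\<dots> \<le> B * real (z - d) powr e"
        using e 1 assms by (intro mult_left_mono powr_mono2') (auto simp: B_def)
      finally show ?thesis .
    qed
    ultimately have "rep_weight s N xs (z - d) * rep_weight s N ys (z' - d)
        \<le> (B * real (z - d) powr e) * (B * real (z - d) powr e)"
      by (intro mult_mono) (auto simp: B_def)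
    also have "\<dots> = B ^ 2 * real (z - d) powr (2 * (real r / real s) - 2)"
      by (simp add: e_def power2_eq_square mult_ac flip: powr_add)
    finally show ?thesis using 1 assms by (simp add: B_def)
  next
    case 2
    have "0 \<notin> set xs" using xs by auto
    then show ?thesis using 2 rep_weight_at_0[OF xs(2)] by simp
  qed simp
qed

lemma shape_weight_le_saturated:
  assumes s: "s \<ge> 2" and Q: "(aK, aI, cK, cJ) \<in> shapes s"
    and full: "length aK + length aI = s" "length cK + length cJ = s" and z: "1 \<le> z" "z \<le> z'"
  shows "shape_weight s N z z' (aK, aI, cK, cJ)
      \<le> 16 * ((4 * real s) ^ s) ^ 3 * (1 + ln (real z)) * real z powr (-1 / real s)"
proof -
  define B where "B = (4 * real s) ^ s"
  define r where "r = length aI"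
  define G where "G m = B ^ 2 * real (z - m) powr (2 * (real r / real s) - 2)" for m
  have cK: "cK = aK" using shapes_common_eq[OF Q full] .
  have r: "length cJ = r" "1 \<le> r" "length aK + r = s" "r + 1 \<le> s"
    using Q full cK by (auto simp: r_def shapes_def Suc_le_eq)
  have sets: "set aK \<subseteq> {1..s}" "set aI \<subseteq> {1..s}" "set cJ \<subseteq> {1..s}" "aK \<noteq> []" "aI \<noteq> []" "cJ \<noteq> []"
    using Q r by (auto simp: shapes_def r_def)
  have "shape_weight s N z z' (aK, aI, cK, cJ)
      \<le> (\<Sum>LK\<in>bounded_lists (length aK) N. list_prob s LK * (if dot aK LK < z then G (dot aK LK) else 0))"
    unfolding shape_weight_eq cK mult.assoc G_def B_def
    using rep_weight_pair_le[OF s sets(2,5) r_def[symmetric] sets(3,6) r(1)] r z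
    by (intro sum_mono mult_left_mono) auto
  also have "\<dots> = (\<Sum>m<z. rep_weight s N aK m * G m)"
    by (rule sum_rep_weight_lessThan)
  also have "\<dots> = (\<Sum>m\<in>{1..<z}. rep_weight s N aK m * G m)"
  proof -
    have "{..<z} = insert 0 {1..<z}" using z by auto
    moreover have "0 \<notin> set aK" using sets by auto
    ultimately show ?thesis using rep_weight_at_0[OF sets(4)] by simp
  qed
  also have "\<dots> \<le> (\<Sum>m\<in>{1..<z}. B ^ 3 *
      (real m powr (- (real r / real s)) * real (z - m) powr (2 * (real r / real s) - 2)))"
  proof (intro sum_mono)
    fix m assume m: "m \<in> {1..<z}"
    have "real (length aK) = real s - real r" using r by simp
    then have "real (length aK) / real s - 1 = - (real r / real s)"
      using s by (simp add: diff_divide_distrib)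
    then have "rep_weight s N aK m \<le> B * real m powr (- (real r / real s))"
      using rep_weight_le_powr'[OF s sets(1,4)] m r by (simp add: B_def)
    then have "rep_weight s N aK m * G m \<le> (B * real m powr (- (real r / real s))) * G m"
      by (intro mult_right_mono) (auto simp: G_def)
    then show "rep_weight s N aK m * G m
        \<le> B ^ 3 * (real m powr (- (real r / real s)) * real (z - m) powr (2 * (real r / real s) - 2))"
      by (simp add: G_def power2_eq_square power3_eq_cube mult_ac)
  qed
  also have "\<dots> = B ^ 3 * (\<Sum>m\<in>{1..<z}.
      real m powr (- (real r / real s)) * real (z - m) powr (2 * (real r / real s) - 2))"
    by (simp add: sum_distrib_left)
  also have "\<dots> \<le> B ^ 3 * (16 * (1 + ln (real z)) * real z powr (- (1 / real s)))"
  proof (intro mult_left_mono convolution_powr_le_ln)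
    show "1 / real s \<le> real r / real s" "real r / real s \<le> 1 - 1 / real s"
      using r s by (auto simp: divide_right_mono field_simps)
  qed (use z in \<open>auto simp: B_def\<close>)
  finally show ?thesis by (simp only: B_def minus_divide_left mult_ac)
qed

lemma shape_weight_le:
  assumes s: "s \<ge> 2" and "Q \<in> shapes s" and z: "3 \<le> z" "z \<le> z'"
  shows "shape_weight s N z z' Q \<le> 32 * ((4 * real s) ^ s) ^ 3 * real z powr (-1 / real s) * ln (real z)"
proof -
  obtain aK aI cK cJ where Q_eq: "Q = (aK, aI, cK, cJ)" by (cases Q) auto
  with assms have Q: "(aK, aI, cK, cJ) \<in> shapes s" by simp
  define B where "B = (4 * real s) ^ s"
  define t where "t = real z powr (-1 / real s)"
  have B: "1 \<le> B" unfolding B_def using s by (intro one_le_power) auto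
  have "exp 1 \<le> (3 :: real)" by (rule exp_le)
  also have "\<dots> \<le> real z" using z by simp
  finally have "exp 1 \<le> real z" .
  then have ln_z: "1 \<le> ln (real z)"
    using ln_ge_iff[of "real z" 1] z by simp
  have t: "0 \<le> t" by (simp add: t_def)
  have short: ?thesis
    if "shape_weight s N z z' (aK, aI, cK, cJ) \<le> B ^ 2 * t"
  proof -
    have "B ^ 2 * t \<le> B ^ 3 * t * 1"
      using B t by (simp add: mult_right_mono power_increasing)
    also have "\<dots> \<le> B ^ 3 * t * (32 * ln (real z))"
      using B t ln_z by (intro mult_left_mono) auto
    finally show ?thesis using that by (simp add: Q_eq B_def t_def mult_ac)
  qed
  consider "length aK + length aI < s" | "length cK + length cJ < s"
    | "length aK + length aI = s" "length cK + length cJ = s"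
    using shapes_length_le[OF Q] by linarith
  then show ?thesis
  proof cases
    case 1
    then show ?thesis using shape_weight_le_unsaturated[OF s Q 1] z by (intro short) (simp add: B_def t_def)
  next
    case 2
    have "shape_weight s N z z' (aK, aI, cK, cJ) \<le> B ^ 2 * real z' powr (-1 / real s)"
      using shape_weight_le_unsaturated[OF s shapes_swap[OF Q] 2] shape_weight_swap[of cK aK] Q z
      by (simp add: B_def shapes_def)
    also have "real z' powr (-1 / real s) \<le> t"
      using z by (simp add: t_def powr_mono2')
    finally have "shape_weight s N z z' (aK, aI, cK, cJ) \<le> B ^ 2 * t"
      by (simp add: mult_left_mono)
    then show ?thesis by (rule short)
  next
    case 3
    have "shape_weight s N z z' (aK, aI, cK, cJ) \<le> 16 * B ^ 3 * (1 + ln (real z)) * t"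
      using shape_weight_le_saturated[OF s Q 3] z by (simp add: B_def t_def)
    also have "\<dots> \<le> 32 * B ^ 3 * t * ln (real z)"
      using B t ln_z by (simp add: mult_left_mono mult_right_mono algebra_simps)
    finally show ?thesis by (simp add: Q_eq B_def t_def)
  qed
qed

section \<open>Probabilities and the encoding of overlapping pairs\<close>

lemma pr_in_le_one:
  assumes s: "s \<ge> 1"
  shows "pr_in s n \<le> 1"
proof (cases "n = 0")
  case False
  have "real n powr (-1 + 1 / real s) \<le> real n powr 0"
    using False s by (intro powr_mono) auto
  moreover have "1 / real s \<le> 1" using s by simp
  ultimately have "1 / real s * real n powr (-1 + 1 / real s) \<le> 1 * 1"
    using False by (intro mult_mono) auto
  then show ?thesis by (simp add: pr_in_def)
qed (simp add: pr_in_def)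

lemma measure_E_ev:
  assumes s: "s \<ge> 1" and F: "finite F"
  shows "measure (rand_set s) (E_ev s F) = (\<Prod>n\<in>F. pr_in s n)"
proof -
  interpret product_prob_space "\<lambda>n. measure_pmf (bernoulli_pmf (pr_in s n))" UNIV
    by unfold_locales (auto intro: prob_space_measure_pmf)
  have "E_ev s F = {A \<in> space (rand_set s). \<forall>n\<in>F. A n \<in> {True}}"
    by (auto simp: E_ev_def)
  also have "emeasure (rand_set s) \<dots> = (\<Prod>n\<in>F. emeasure (bernoulli_pmf (pr_in s n)) {True})"
    unfolding rand_set_def using F by (intro emeasure_PiM_Collect) auto
  also have "\<dots> = ennreal (\<Prod>n\<in>F. pr_in s n)"
    using pr_in_le_one[OF s] by (simp add: emeasure_pmf_single prod_ennreal)
  finally show ?thesis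
    by (simp add: measure_def prod_nonneg)
qed

lemma E_ev_Int: "E_ev s \<omega> \<inter> E_ev s \<omega>' = E_ev s (\<omega> \<union> \<omega>')"
  by (auto simp: E_ev_def)

definition rep_coeffs :: "nat \<Rightarrow> nat set \<Rightarrow> nat \<Rightarrow> nat \<Rightarrow> nat" where
  "rep_coeffs s \<omega> z = (SOME a. (\<forall>x\<in>\<omega>. a x \<ge> 1) \<and> (\<Sum>x\<in>\<omega>. a x) = s \<and> z = (\<Sum>x\<in>\<omega>. a x * x))"

lemma rep_coeffs:
  assumes "\<omega> \<in> Omega s z"
  shows "\<forall>x\<in>\<omega>. rep_coeffs s \<omega> z x \<ge> 1" "(\<Sum>x\<in>\<omega>. rep_coeffs s \<omega> z x) = s"
    "z = (\<Sum>x\<in>\<omega>. rep_coeffs s \<omega> z x * x)"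
proof -
  from assms obtain a where "(\<forall>x\<in>\<omega>. a x \<ge> 1) \<and> (\<Sum>x\<in>\<omega>. a x) = s \<and> z = (\<Sum>x\<in>\<omega>. a x * x)"
    by (auto simp: Omega_def sigma_set_def)
  then have "(\<forall>x\<in>\<omega>. rep_coeffs s \<omega> z x \<ge> 1) \<and> (\<Sum>x\<in>\<omega>. rep_coeffs s \<omega> z x) = s
      \<and> z = (\<Sum>x\<in>\<omega>. rep_coeffs s \<omega> z x * x)"
    unfolding rep_coeffs_def
    by (rule someI[where P = "\<lambda>a. (\<forall>x\<in>\<omega>. a x \<ge> 1) \<and> (\<Sum>x\<in>\<omega>. a x) = s \<and> z = (\<Sum>x\<in>\<omega>. a x * x)"])
  then show "\<forall>x\<in>\<omega>. rep_coeffs s \<omega> z x \<ge> 1" "(\<Sum>x\<in>\<omega>. rep_coeffs s \<omega> z x) = s"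
    "z = (\<Sum>x\<in>\<omega>. rep_coeffs s \<omega> z x * x)"
    by auto
qed

lemma rep_coeffs_le:
  assumes "\<omega> \<in> Omega s z" "x \<in> \<omega>"
  shows "rep_coeffs s \<omega> z x \<le> s"
  using member_le_sum[of x \<omega> "rep_coeffs s \<omega> z"] rep_coeffs(2)[OF assms(1)] assms
  by (simp add: Omega_def)

lemma Omega_memberD:
  assumes "\<omega> \<in> Omega s z" "x \<in> \<omega>"
  shows "1 \<le> x" "x \<le> z"
proof -
  show "1 \<le> x" using assms by (cases x) (auto simp: Omega_def)
  have "x \<le> rep_coeffs s \<omega> z x * x"
    using rep_coeffs(1)[OF assms(1)] assms(2) by simp
  also have "\<dots> \<le> (\<Sum>y\<in>\<omega>. rep_coeffs s \<omega> z y * y)"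
    using assms by (intro member_le_sum) (auto simp: Omega_def)
  finally show "x \<le> z" using rep_coeffs(3)[OF assms(1)] by simp
qed

definition overlapping_pairs :: "nat \<Rightarrow> nat \<Rightarrow> nat \<Rightarrow> (nat set \<times> nat set) set" where
  "overlapping_pairs s z z' = {(\<omega>, \<omega>'). \<omega> \<in> Omega s z \<and> \<omega>' \<in> Omega s z' \<and> rel_sim \<omega> \<omega>'}"

definition overlap_code :: "nat \<Rightarrow> nat \<Rightarrow> nat \<Rightarrow> nat set \<times> nat set
    \<Rightarrow> (nat list \<times> nat list \<times> nat list \<times> nat list) \<times> (nat list \<times> nat list \<times> nat list)" where
  "overlap_code s z z' = (\<lambda>(\<omega>, \<omega>').
     let a = rep_coeffs s \<omega> z; c = rep_coeffs s \<omega>' z';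
         K = sorted_list_of_set (\<omega> \<inter> \<omega>'); I = sorted_list_of_set (\<omega> - \<omega>'); J = sorted_list_of_set (\<omega>' - \<omega>)
     in ((map a K, map a I, map c K, map c J), (K, I, J)))"

definition codes :: "nat \<Rightarrow> nat
    \<Rightarrow> ((nat list \<times> nat list \<times> nat list \<times> nat list) \<times> (nat list \<times> nat list \<times> nat list)) set" where
  "codes s N = Sigma (shapes s)
     (\<lambda>(aK, aI, cK, cJ). bounded_lists (length aK) N \<times> bounded_lists (length aI) N \<times> bounded_lists (length cJ) N)"

definition code_weight :: "nat \<Rightarrow> nat \<Rightarrow> nat \<Rightarrow>
    (nat list \<times> nat list \<times> nat list \<times> nat list) \<times> (nat list \<times> nat list \<times> nat list) \<Rightarrow> real" where
  "code_weight s z z' = (\<lambda>((aK, aI, cK, cJ), (LK, LI, LJ)).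
     if dot aK LK + dot aI LI = z \<and> dot cK LK + dot cJ LJ = z'
     then list_prob s LK * list_prob s LI * list_prob s LJ else 0)"

lemma code_weight_nonneg: "0 \<le> code_weight s z z' q"
  by (auto simp: code_weight_def split: prod.splits)

lemma finite_codes: "finite (codes s N)"
  unfolding codes_def using finite_shapes by (intro finite_SigmaI) (auto split: prod.splits)

lemma sum_codes: "(\<Sum>q\<in>codes s N. code_weight s z z' q) = (\<Sum>Q\<in>shapes s. shape_weight s N z z' Q)"
proof -
  have "(\<Sum>q\<in>codes s N. code_weight s z z' q) = (\<Sum>Q\<in>shapes s. \<Sum>Ls\<in>(case Q of (aK, aI, cK, cJ) \<Rightarrow>
      bounded_lists (length aK) N \<times> bounded_lists (length aI) N \<times> bounded_lists (length cJ) N).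
      code_weight s z z' (Q, Ls))"
    unfolding codes_def using finite_shapes by (subst sum.Sigma) (auto split: prod.splits)
  also have "\<dots> = (\<Sum>Q\<in>shapes s. shape_weight s N z z' Q)"
    by (intro sum.cong refl)
      (auto simp: code_weight_def shape_weight_def sum.cartesian_product split: prod.splits)
  finally show ?thesis .
qed

lemma inj_on_overlap_code: "inj_on (overlap_code s z z') (overlapping_pairs s z z')"
proof (rule inj_onI)
  fix p q assume "p \<in> overlapping_pairs s z z'" "q \<in> overlapping_pairs s z z'"
    and eq: "overlap_code s z z' p = overlap_code s z z' q"
  then obtain \<omega>1 \<omega>1' \<omega>2 \<omega>2' where pq: "p = (\<omega>1, \<omega>1')" "q = (\<omega>2, \<omega>2')"
    and fin: "finite \<omega>1" "finite \<omega>1'" "finite \<omega>2" "finite \<omega>2'"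
    by (auto simp: overlapping_pairs_def Omega_def)
  from eq have "sorted_list_of_set (\<omega>1 \<inter> \<omega>1') = sorted_list_of_set (\<omega>2 \<inter> \<omega>2')"
    "sorted_list_of_set (\<omega>1 - \<omega>1') = sorted_list_of_set (\<omega>2 - \<omega>2')"
    "sorted_list_of_set (\<omega>1' - \<omega>1) = sorted_list_of_set (\<omega>2' - \<omega>2)"
    by (auto simp: overlap_code_def pq Let_def)
  then have "\<omega>1 \<inter> \<omega>1' = \<omega>2 \<inter> \<omega>2'" "\<omega>1 - \<omega>1' = \<omega>2 - \<omega>2'" "\<omega>1' - \<omega>1 = \<omega>2' - \<omega>2"
    using fin by (metis finite_Diff finite_Int sorted_list_of_set.set_sorted_key_list_of_set)+
  then show "p = q" using pq by blast
qed

lemma sum_list_map_sorted_list_of_set: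
  "finite X \<Longrightarrow> sum_list (map f (sorted_list_of_set X)) = sum f X"
  by (simp add: sum_list_distinct_conv_sum_set)

lemma dot_map_sorted_list_of_set:
  "finite X \<Longrightarrow> dot (map f (sorted_list_of_set X)) (sorted_list_of_set X) = (\<Sum>x\<in>X. f x * x)"
proof -
  have "dot (map f L) L = sum_list (map (\<lambda>x. f x * x) L)" for L
    by (induction L) auto
  then show "finite X \<Longrightarrow> ?thesis" by (simp add: sum_list_map_sorted_list_of_set)
qed

lemma list_prob_sorted_list_of_set:
  "finite X \<Longrightarrow> list_prob s (sorted_list_of_set X) = (\<Prod>n\<in>X. pr_in s n)"
  unfolding list_prob_def using prod.distinct_set_conv_list[of "sorted_list_of_set X" "pr_in s"] by simp

lemma overlap_code_in_codes:
  assumes p: "(\<omega>, \<omega>') \<in> overlapping_pairs s z z'" and "z \<le> z'"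
  shows "overlap_code s z z' (\<omega>, \<omega>') \<in> codes s z'"
proof -
  define a where "a = rep_coeffs s \<omega> z"
  define c where "c = rep_coeffs s \<omega>' z'"
  have o: "\<omega> \<in> Omega s z" "\<omega>' \<in> Omega s z'" and sim: "\<omega> \<inter> \<omega>' \<noteq> {}" "\<omega> \<noteq> \<omega>'"
    using p by (auto simp: overlapping_pairs_def rel_sim_def)
  have fin: "finite \<omega>" "finite \<omega>'" using o by (auto simp: Omega_def)
  have a: "x \<in> \<omega> \<Longrightarrow> a x \<in> {1..s}" and c: "x \<in> \<omega>' \<Longrightarrow> c x \<in> {1..s}" for x
    using rep_coeffs(1) rep_coeffs_le o by (auto simp: a_def c_def)
  have "sum a (\<omega> \<inter> \<omega>') + sum a (\<omega> - \<omega>') = s" "sum c (\<omega> \<inter> \<omega>') + sum c (\<omega>' - \<omega>) = s"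
    using rep_coeffs(2)[OF o(1)] rep_coeffs(2)[OF o(2)] sum.Int_Diff[OF fin(1), of a \<omega>']
      sum.Int_Diff[OF fin(2), of c \<omega>] by (simp_all add: a_def c_def Int_commute)
  moreover have "\<omega> - \<omega>' \<noteq> {} \<or> \<omega>' - \<omega> \<noteq> {}" using sim by blast
  ultimately have shape: "(map a (sorted_list_of_set (\<omega> \<inter> \<omega>')), map a (sorted_list_of_set (\<omega> - \<omega>')),
      map c (sorted_list_of_set (\<omega> \<inter> \<omega>')), map c (sorted_list_of_set (\<omega>' - \<omega>))) \<in> shapes s"
    using fin sim a c by (auto simp: shapes_def sum_list_map_sorted_list_of_set)
  have bounded: "sorted_list_of_set X \<in> bounded_lists (card X) z'" if X: "X \<subseteq> \<omega> \<union> \<omega>'" for X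
  proof -
    have "X \<subseteq> {1..z'}"
    proof
      fix x assume "x \<in> X"
      then consider "x \<in> \<omega>" | "x \<in> \<omega>'" using X by blast
      then show "x \<in> {1..z'}"
        using Omega_memberD[OF o(1), of x] Omega_memberD[OF o(2), of x] \<open>z \<le> z'\<close> by cases auto
    qed
    moreover have "finite X"
      using X fin by (meson finite_Un finite_subset)
    ultimately show ?thesis
      by (simp add: bounded_lists_def)
  qed
  have "sorted_list_of_set (\<omega> \<inter> \<omega>') \<in> bounded_lists (card (\<omega> \<inter> \<omega>')) z'"
    "sorted_list_of_set (\<omega> - \<omega>') \<in> bounded_lists (card (\<omega> - \<omega>')) z'"
    "sorted_list_of_set (\<omega>' - \<omega>) \<in> bounded_lists (card (\<omega>' - \<omega>)) z'"
    by (auto intro: bounded)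
  then show ?thesis
    using shape by (simp add: overlap_code_def codes_def a_def c_def Let_def)
qed

lemma code_weight_overlap_code:
  assumes "s \<ge> 1" and p: "(\<omega>, \<omega>') \<in> overlapping_pairs s z z'"
  shows "code_weight s z z' (overlap_code s z z' (\<omega>, \<omega>')) = measure (rand_set s) (E_ev s \<omega> \<inter> E_ev s \<omega>')"
proof -
  define a where "a = rep_coeffs s \<omega> z"
  define c where "c = rep_coeffs s \<omega>' z'"
  have o: "\<omega> \<in> Omega s z" "\<omega>' \<in> Omega s z'"
    using p by (auto simp: overlapping_pairs_def)
  have fin: "finite \<omega>" "finite \<omega>'" using o by (auto simp: Omega_def)
  have "(\<Sum>x\<in>\<omega> \<inter> \<omega>'. a x * x) + (\<Sum>x\<in>\<omega> - \<omega>'. a x * x) = z"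
    "(\<Sum>x\<in>\<omega> \<inter> \<omega>'. c x * x) + (\<Sum>x\<in>\<omega>' - \<omega>. c x * x) = z'"
    using rep_coeffs(3)[OF o(1)] rep_coeffs(3)[OF o(2)] sum.Int_Diff[OF fin(1), of "\<lambda>x. a x * x" \<omega>']
      sum.Int_Diff[OF fin(2), of "\<lambda>x. c x * x" \<omega>] by (simp_all add: a_def c_def Int_commute)
  then have "code_weight s z z' (overlap_code s z z' (\<omega>, \<omega>'))
      = (\<Prod>n\<in>\<omega> \<inter> \<omega>'. pr_in s n) * (\<Prod>n\<in>\<omega> - \<omega>'. pr_in s n) * (\<Prod>n\<in>\<omega>' - \<omega>. pr_in s n)"
    using fin by (simp add: overlap_code_def code_weight_def Let_def dot_map_sorted_list_of_set
        list_prob_sorted_list_of_set flip: a_def c_def)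
  also have "\<dots> = (\<Prod>n\<in>\<omega> \<union> \<omega>'. pr_in s n)"
    using fin by (simp add: prod.union_diff2 mult_ac)
  also have "\<dots> = measure (rand_set s) (E_ev s \<omega> \<inter> E_ev s \<omega>')"
    using fin assms(1) by (simp add: E_ev_Int measure_E_ev)
  finally show ?thesis .
qed

lemma sum_overlapping_pairs_le:
  assumes "s \<ge> 1" "z \<le> z'"
  shows "(\<Sum>(\<omega>, \<omega>')\<in>overlapping_pairs s z z'. measure (rand_set s) (E_ev s \<omega> \<inter> E_ev s \<omega>'))
      \<le> (\<Sum>Q\<in>shapes s. shape_weight s z' z z' Q)"
proof -
  have "(\<Sum>(\<omega>, \<omega>')\<in>overlapping_pairs s z z'. measure (rand_set s) (E_ev s \<omega> \<inter> E_ev s \<omega>'))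
      = (\<Sum>p\<in>overlapping_pairs s z z'. code_weight s z z' (overlap_code s z z' p))"
    using code_weight_overlap_code[OF assms(1)] by (intro sum.cong) auto
  also have "\<dots> = (\<Sum>q\<in>overlap_code s z z' ` overlapping_pairs s z z'. code_weight s z z' q)"
    by (rule sum.reindex[OF inj_on_overlap_code, symmetric, unfolded comp_def])
  also have "\<dots> \<le> (\<Sum>q\<in>codes s z'. code_weight s z z' q)"
    using overlap_code_in_codes assms(2)
    by (intro sum_mono2 finite_codes) (auto simp: code_weight_nonneg)
  also have "\<dots> = (\<Sum>Q\<in>shapes s. shape_weight s z' z z' Q)"
    by (rule sum_codes)
  finally show ?thesis .
qed

theorem lemma3:
  fixes s :: nat
  assumes "s \<ge> 2"
  shows "\<exists>C>0. \<exists>Z::nat. \<forall>z z' :: nat. Z \<le> z \<longrightarrow> z \<le> z' \<longrightarrow>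
    (\<Sum>(\<omega>, \<omega>') \<in> {(\<omega>, \<omega>'). \<omega> \<in> Omega s z \<and> \<omega>' \<in> Omega s z' \<and> rel_sim \<omega> \<omega>'}.
        measure (rand_set s) (E_ev s \<omega> \<inter> E_ev s \<omega>'))
      \<le> C * real z powr (-1 / real s) * ln (real z)"
proof -
  define K where "K = 32 * ((4 * real s) ^ s) ^ 3"
  define C where "C = (real (card (shapes s)) + 1) * K"
  have "0 < C" using assms by (simp add: C_def K_def)
  moreover have "(\<Sum>(\<omega>, \<omega>')\<in>overlapping_pairs s z z'. measure (rand_set s) (E_ev s \<omega> \<inter> E_ev s \<omega>'))
      \<le> C * real z powr (-1 / real s) * ln (real z)" if z: "3 \<le> z" "z \<le> z'" for z z'
  proof -
    let ?t = "real z powr (-1 / real s) * ln (real z)"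
    have "(\<Sum>(\<omega>, \<omega>')\<in>overlapping_pairs s z z'. measure (rand_set s) (E_ev s \<omega> \<inter> E_ev s \<omega>'))
        \<le> (\<Sum>Q\<in>shapes s. shape_weight s z' z z' Q)"
      using assms z by (intro sum_overlapping_pairs_le) auto
    also have "\<dots> \<le> (\<Sum>Q\<in>shapes s. K * ?t)"
      using shape_weight_le[OF assms _ z] by (intro sum_mono) (auto simp: K_def mult_ac)
    also have "\<dots> \<le> C * ?t"
      using z \<open>0 < C\<close> by (simp add: C_def K_def mult_right_mono)
    finally show ?thesis by (simp add: mult_ac)
  qed
  ultimately show ?thesis
    unfolding overlapping_pairs_def by blast
qed

end
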